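(* Let $A \in L(H)$ be hyperbolic, let $M_1 \coloneqq \sup_{z \in S_1} |(z-A)^{-1}|_{L(H)}$, and let $F \colon \ell_2(\mathbb{Z}; H) \to \ell_2(\mathbb{Z}; H)$ have Lipschitz constant $|F|_{\operatorname{Lip}(\ell_2(\mathbb{Z}; H))} < 1/M_1$. Let $P\coloneqq P_1^+$, $Q\coloneqq P_1^-$ be the Riesz projections, $\xi \in P[H]$ and $u \in \ell_2(\mathbb{Z}; H)$. Then the following are equivalent: (i) $u$ is the unique fixed point of the contraction $\mathcal{L}_1(\xi, \cdot)\colon \ell_2(\mathbb{Z};H)\to\ell_2(\mathbb{Z};H)$, $w\mapsto \chi_{\mathbb{Z}_{\geq 0}}(\tau - A)^{-1}(F(w) + \delta_{-1}\xi)$; (ii) $\operatorname{spt} u \subseteq \mathbb{Z}_{\geq 0}$ and for all $n \in \mathbb{Z}_{\geq 0}$ $$P u_n = (PAP)^n \xi + \sum_{k = -\infty}^{n-1} (PAP)^{n-1-k} P F(u)_k,\qquad Q u_n = -\sum_{k = n}^{\infty} (QAQ)^{n-1-k} Q F(u)_k.$$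
   Context: $H$ is a separable complex Hilbert space. $A\in L(H)$ is hyperbolic if $\sigma(A)\cap S_1=\emptyset$, $S_1=\{|z|=1\}$. Riesz projections: $P_1^+ = \frac{1}{2\pi i}\int_{S_1}(z-A)^{-1}\,dz$, $P_1^- = I-P_1^+$; they commute with $A$, $\sigma(A|_{P[H]})=\sigma(A)\cap\{|z|<1\}$, $\sigma(A|_{Q[H]})=\sigma(A)\setminus\{|z|\le 1\}$ (so $A|_{Q[H]}$ is invertible). For $m<0$, $(QAQ)^m$ on $Q[H]$ means $((A|_{Q[H]})^{-1})^{-m}$; powers with exponent $0$ are the identity. $\ell_2(\mathbb{Z};H)$ is the space of square-summable two-sided $H$-valued sequences; $\tau$ is the shift $(\tau u)_n = u_{n+1}$; $A$ acts componentwise; $(\tau-A)^{-1}$ is the inverse of $\tau - A$ on $\ell_2(\mathbb{Z};H)$; $\delta_{-1}\xi$ has entry $\xi$ at index $-1$ and $0$ elsewhere; $\chi_{\mathbb{Z}_{\geq0}}$ is multiplication by the indicator of $\mathbb{Z}_{\geq 0}$; $\operatorname{spt} u=\{n: u_n\neq0\}$. *)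

theory Defs
  imports "HOL-Complex_Analysis.Complex_Analysis"
begin

text \<open>A complex Hilbert space is
  modelled as a complete real inner product space (inner = real part of the complex inner
  product) equipped with a complex scalar multiplication extending the real one, for which
  multiplication by the imaginary unit is an isometry. This is equivalent to the usual notion:
  the complex inner product is recovered as inner x y + i * inner x (i y) (up to convention).\<close>

class complex_hilbert = real_inner + complete_space +
  fixes scaleC :: "complex \<Rightarrow> 'a \<Rightarrow> 'a"  (infixr \<open>*\<^sub>C\<close> 75)
  assumes scaleC_add_right: "a *\<^sub>C (x + y) = a *\<^sub>C x + a *\<^sub>C y"
    and scaleC_add_left: "(a + b) *\<^sub>C x = a *\<^sub>C x + b *\<^sub>C x"
    and scaleC_scaleC: "a *\<^sub>C (b *\<^sub>C x) = (a * b) *\<^sub>C x"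
    and scaleC_of_real: "(complex_of_real r) *\<^sub>C x = r *\<^sub>R x"
    and inner_scaleC_ii: "inner (\<i> *\<^sub>C x) (\<i> *\<^sub>C y) = inner x y"

definition bounded_clinear_op :: "('a::complex_hilbert \<Rightarrow> 'a) \<Rightarrow> bool" where
  "bounded_clinear_op T \<longleftrightarrow> bounded_linear T \<and> (\<forall>c x. T (c *\<^sub>C x) = c *\<^sub>C T x)"

definition zminus :: "complex \<Rightarrow> ('a::complex_hilbert \<Rightarrow> 'a) \<Rightarrow> 'a \<Rightarrow> 'a" where
  "zminus z A = (\<lambda>x. z *\<^sub>C x - A x)"

definition spectrum :: "('a::complex_hilbert \<Rightarrow> 'a) \<Rightarrow> complex set" where
  "spectrum A = {z. \<not> (\<exists>B. bounded_clinear_op B \<and> B \<circ> zminus z A = id \<and> zminus z A \<circ> B = id)}"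

definition hyperbolic :: "('a::complex_hilbert \<Rightarrow> 'a) \<Rightarrow> bool" where
  "hyperbolic A \<longleftrightarrow> spectrum A \<inter> sphere 0 1 = {}"

definition resolvent :: "('a::complex_hilbert \<Rightarrow> 'a) \<Rightarrow> complex \<Rightarrow> 'a \<Rightarrow> 'a" where
  "resolvent A z = inv (zminus z A)"

definition M1 :: "('a::complex_hilbert \<Rightarrow> 'a) \<Rightarrow> real" where
  "M1 A = (SUP z\<in>sphere 0 1. onorm (resolvent A z))"

text \<open>Riesz projection P_1^+ = (1/(2 pi i)) \<integral>_{S_1} (z - A)^{-1} dz, with the integral over the
  positively oriented unit circle, taken strongly (applied to a vector x).\<close>
definition riesz_P :: "('a::complex_hilbert \<Rightarrow> 'a) \<Rightarrow> 'a \<Rightarrow> 'a" where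
  "riesz_P A x = (1 / (2 * complex_of_real pi * \<i>)) *\<^sub>C
     integral {0..1} (\<lambda>t. vector_derivative (circlepath 0 1) (at t within {0..1})
                          *\<^sub>C resolvent A (circlepath 0 1 t) x)"

definition riesz_Q :: "('a::complex_hilbert \<Rightarrow> 'a) \<Rightarrow> 'a \<Rightarrow> 'a" where
  "riesz_Q A x = x - riesz_P A x"

definition PAP_pow :: "('a::complex_hilbert \<Rightarrow> 'a) \<Rightarrow> nat \<Rightarrow> 'a \<Rightarrow> 'a" where
  "PAP_pow A m = (\<lambda>x. riesz_P A (A (riesz_P A x))) ^^ m"

definition QA_inv :: "('a::complex_hilbert \<Rightarrow> 'a) \<Rightarrow> 'a \<Rightarrow> 'a" where
  "QA_inv A y = (THE x. x \<in> range (riesz_Q A) \<and> A x = y)"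

text \<open>(QAQ)^{-m} = ((A|_{Q[H]})^{-1})^m on Q[H], for m \<ge> 0.\<close>
definition QAQ_negpow :: "('a::complex_hilbert \<Rightarrow> 'a) \<Rightarrow> nat \<Rightarrow> 'a \<Rightarrow> 'a" where
  "QAQ_negpow A m = QA_inv A ^^ m"

definition l2seq :: "(int \<Rightarrow> 'a::real_normed_vector) \<Rightarrow> bool" where
  "l2seq u \<longleftrightarrow> (\<lambda>n. (norm (u n))\<^sup>2) summable_on UNIV"

definition l2norm :: "(int \<Rightarrow> 'a::real_normed_vector) \<Rightarrow> real" where
  "l2norm u = sqrt (\<Sum>\<^sub>\<infinity>n\<in>UNIV. (norm (u n))\<^sup>2)"

definition shift_minus_inv :: "('a::complex_hilbert \<Rightarrow> 'a) \<Rightarrow> (int \<Rightarrow> 'a) \<Rightarrow> int \<Rightarrow> 'a" where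
  "shift_minus_inv A g = (THE v. l2seq v \<and> (\<forall>n. v (n + 1) - A (v n) = g n))"

definition delta_m1 :: "'a::zero \<Rightarrow> int \<Rightarrow> 'a" where
  "delta_m1 \<xi> = (\<lambda>n. if n = -1 then \<xi> else 0)"

definition chi_nonneg :: "(int \<Rightarrow> 'a::zero) \<Rightarrow> int \<Rightarrow> 'a" where
  "chi_nonneg w = (\<lambda>n. if 0 \<le> n then w n else 0)"

definition L1 :: "('a::complex_hilbert \<Rightarrow> 'a) \<Rightarrow> ((int \<Rightarrow> 'a) \<Rightarrow> (int \<Rightarrow> 'a)) \<Rightarrow> 'a
                   \<Rightarrow> (int \<Rightarrow> 'a) \<Rightarrow> int \<Rightarrow> 'a" where
  "L1 A F \<xi> w = chi_nonneg (shift_minus_inv A (\<lambda>n. F w n + delta_m1 \<xi> n))"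

definition spt :: "(int \<Rightarrow> 'a::zero) \<Rightarrow> int set" where
  "spt u = {n. u n \<noteq> 0}"

end

theory Submission
  imports Defs
begin

text \<open>On the unit circle z = e^{2 pi i t} the resolvent (z - A)^{-1} is continuous, and its
  Fourier coefficients G_m = integral_0^1 z^m (z - A)^{-1} dt form a Green kernel of tau - A:
  G_{m+1} - A G_m = [m = 0]. By Bessel's inequality the convolution g \<mapsto> (sum_k G_{n-k} g_k)_n
  is bounded on l_2 with norm at most M_1, and since A has no nonzero two-sided l_2 orbit it is
  (tau - A)^{-1}. The Riesz projection P is G_1; uniqueness of l_2 solutions gives
  P G_m = G_m for m \<ge> 1 and P G_m = 0 for m \<le> 0, and then G_{m+1} = (PAP)^m P and
  G_{-j} = -(QAQ)^{-j-1} Q. Projecting the convolution with P and Q thus turns (ii) into the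
  fixed-point equation of L_1(xi, .), and the fixed point is unique because L_1(xi, .) has
  Lipschitz constant at most M_1 Lip < 1.\<close>

instance complex_hilbert \<subseteq> banach ..

lemma scaleC_one [simp]: "1 *\<^sub>C (x::'a::complex_hilbert) = x"
  using scaleC_of_real[of 1 x] by simp

lemma scaleC_zero_left [simp]: "0 *\<^sub>C (x::'a::complex_hilbert) = 0"
  using scaleC_of_real[of 0 x] by simp

lemma scaleC_zero_right [simp]: "c *\<^sub>C (0::'a::complex_hilbert) = 0"
  by (metis add_cancel_right_right scaleC_add_right)

lemma scaleC_minus_right: "c *\<^sub>C (- x::'a::complex_hilbert) = - (c *\<^sub>C x)"
  by (metis add_eq_0_iff scaleC_add_right scaleC_zero_right)

lemma scaleC_diff_right: "c *\<^sub>C (x - y::'a::complex_hilbert) = c *\<^sub>C x - c *\<^sub>C y"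
  by (metis diff_conv_add_uminus scaleC_add_right scaleC_minus_right)

lemma scaleC_scaleR_commute: "c *\<^sub>C (r *\<^sub>R (x::'a::complex_hilbert)) = r *\<^sub>R (c *\<^sub>C x)"
  by (metis mult.commute scaleC_of_real scaleC_scaleC)

lemma scaleC_eq_Re_Im: "c *\<^sub>C (x::'a::complex_hilbert) = Re c *\<^sub>R x + Im c *\<^sub>R (\<i> *\<^sub>C x)"
proof -
  have "c = complex_of_real (Re c) + complex_of_real (Im c) * \<i>"
    by (simp add: complex_eq_iff)
  then show ?thesis
    by (metis scaleC_add_left scaleC_of_real scaleC_scaleC)
qed

lemma inner_ii_scaleC_left: "inner (\<i> *\<^sub>C x) (y::'a::complex_hilbert) = - inner x (\<i> *\<^sub>C y)"
proof -
  have "\<i> *\<^sub>C (\<i> *\<^sub>C x) = - x"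
    using scaleC_of_real[of "-1" x] by (simp add: scaleC_scaleC)
  then show ?thesis
    using inner_scaleC_ii[of "\<i> *\<^sub>C x" y] by simp
qed

lemma inner_scaleC_scaleC:
  "inner (c *\<^sub>C x) (c *\<^sub>C (y::'a::complex_hilbert)) = (cmod c)\<^sup>2 * inner x y"
proof -
  have "inner (c *\<^sub>C x) (c *\<^sub>C y) = (Re c)\<^sup>2 * inner x y + (Im c)\<^sup>2 * inner (\<i> *\<^sub>C x) (\<i> *\<^sub>C y)
      + Re c * Im c * (inner x (\<i> *\<^sub>C y) + inner (\<i> *\<^sub>C x) y)"
    unfolding scaleC_eq_Re_Im[of c x] scaleC_eq_Re_Im[of c y]
    by (simp add: inner_add_left inner_add_right algebra_simps power2_eq_square)
  also have "\<dots> = ((Re c)\<^sup>2 + (Im c)\<^sup>2) * inner x y"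
    using inner_scaleC_ii[of x y] inner_ii_scaleC_left[of x y] by (simp add: algebra_simps)
  finally show ?thesis
    by (simp add: cmod_power2)
qed

lemma norm_scaleC: "norm (c *\<^sub>C (x::'a::complex_hilbert)) = cmod c * norm x"
proof -
  have "(norm (c *\<^sub>C x))\<^sup>2 = (cmod c * norm x)\<^sup>2"
    using inner_scaleC_scaleC[of c x x] by (simp add: power_mult_distrib flip: power2_norm_eq_inner)
  then show ?thesis
    by (rule power2_eq_imp_eq) auto
qed

lemma bounded_bilinear_scaleC: "bounded_bilinear (scaleC :: complex \<Rightarrow> 'a::complex_hilbert \<Rightarrow> 'a)"
proof
  show "\<exists>K. \<forall>c x. norm (c *\<^sub>C (x::'a)) \<le> norm c * norm x * K"
    by (intro exI[of _ 1]) (simp add: norm_scaleC)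
qed (simp_all add: scaleC_add_left scaleC_add_right scaleC_scaleR_commute scaleR_conv_of_real scaleC_of_real
    flip: scaleC_scaleC)

lemmas bounded_linear_scaleC_left = bounded_bilinear.bounded_linear_left[OF bounded_bilinear_scaleC]
lemmas bounded_linear_scaleC_right = bounded_bilinear.bounded_linear_right[OF bounded_bilinear_scaleC]
lemmas continuous_on_scaleC [continuous_intros] =
  bounded_bilinear.continuous_on[OF bounded_bilinear_scaleC]

section \<open>Characters of the circle and Bessel's inequality\<close>

definition fourier_char :: "int \<Rightarrow> real \<Rightarrow> complex" where
  "fourier_char m t = exp (2 * of_real pi * \<i> * of_int m * of_real t)"

lemma norm_fourier_char [simp]: "cmod (fourier_char m t) = 1"
  by (simp add: fourier_char_def norm_exp_eq_Re)

lemma fourier_char_0 [simp]: "fourier_char 0 t = 1"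
  by (simp add: fourier_char_def)

lemma fourier_char_mult: "fourier_char m t * fourier_char k t = fourier_char (m + k) t"
  by (simp add: fourier_char_def algebra_simps flip: exp_add)

lemma fourier_char_in_sphere [simp]: "fourier_char m t \<in> sphere 0 1"
  by simp

lemma circlepath_eq_fourier_char: "circlepath 0 1 t = fourier_char 1 t"
  by (simp add: circlepath fourier_char_def)

lemma continuous_on_fourier_char [continuous_intros]: "continuous_on S (fourier_char m)"
  unfolding fourier_char_def by (intro continuous_intros)

lemma fourier_char_has_integral:
  "(fourier_char m has_integral (if m = 0 then 1 else 0)) {0..1}"
proof (cases "m = 0")
  case False
  define c where "c = 2 * of_real pi * \<i> * of_int m"
  have "c \<noteq> 0"
    using False by (simp add: c_def)
  have "((\<lambda>z. exp (c * z) / c) has_field_derivative exp (c * of_real t)) (at (of_real t))" for t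
    using \<open>c \<noteq> 0\<close> by (auto intro!: derivative_eq_intros)
  then have "((\<lambda>t. fourier_char m t / c) has_vector_derivative fourier_char m t) (at t within {0..1})" for t
    unfolding fourier_char_def c_def by (rule has_vector_derivative_real_field)
  then have "(fourier_char m has_integral (fourier_char m 1 / c - fourier_char m 0 / c)) {0..1}"
    by (intro fundamental_theorem_of_calculus) auto
  moreover have "fourier_char m 0 = 1"
    by (simp add: fourier_char_def)
  moreover have "fourier_char m 1 = 1"
    using exp_integer_2pi[of "of_int m"] by (simp add: fourier_char_def algebra_simps)
  ultimately show ?thesis
    using False by simp
next
  case True
  have "fourier_char 0 = (\<lambda>_. 1)"
    by auto
  then show ?thesis
    using True has_integral_const_real[of "1::complex" 0 1] by simp
qed

lemma fourier_char_scaleC_has_integral: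
  "((\<lambda>t. fourier_char m t *\<^sub>C (x::'a::complex_hilbert)) has_integral (if m = 0 then x else 0)) {0..1}"
  using has_integral_linear[OF fourier_char_has_integral[of m] bounded_linear_scaleC_left[of x]]
  by (cases "m = 0") (simp_all add: o_def)

lemma inner_fourier_char_scaleC:
  "inner (fourier_char a t *\<^sub>C (x::'a::complex_hilbert)) (fourier_char b t *\<^sub>C y)
     = inner (fourier_char (a - b) t *\<^sub>C x) y"
  using inner_scaleC_scaleC[of "fourier_char (- b) t" "fourier_char a t *\<^sub>C x" "fourier_char b t *\<^sub>C y"]
  by (simp add: scaleC_scaleC fourier_char_mult)

lemma inner_fourier_char_scaleC_has_integral:
  "((\<lambda>t. inner (fourier_char m t *\<^sub>C (x::'a::complex_hilbert)) y) has_integral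
     (if m = 0 then inner x y else 0)) {0..1}"
  using has_integral_linear[OF fourier_char_scaleC_has_integral[of m x] bounded_linear_inner_left[of y]]
  by (cases "m = 0") (simp_all add: o_def)

lemma trig_poly_norm_has_integral:
  fixes c :: "int \<Rightarrow> 'a::complex_hilbert"
  assumes "finite N"
  shows "((\<lambda>t. (norm (\<Sum>m\<in>N. fourier_char (- m) t *\<^sub>C c m))\<^sup>2) has_integral (\<Sum>m\<in>N. (norm (c m))\<^sup>2)) {0..1}"
proof -
  have "((\<lambda>t. \<Sum>k\<in>N. \<Sum>m\<in>N. inner (fourier_char (k - m) t *\<^sub>C c m) (c k)) has_integral
      (\<Sum>k\<in>N. \<Sum>m\<in>N. if k - m = 0 then inner (c m) (c k) else 0)) {0..1}"
    by (intro has_integral_sum assms inner_fourier_char_scaleC_has_integral)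
  moreover have "(\<Sum>k\<in>N. \<Sum>m\<in>N. if k - m = 0 then inner (c m) (c k) else 0) = (\<Sum>m\<in>N. (norm (c m))\<^sup>2)"
    by (rule sum.cong) (auto simp: power2_norm_eq_inner assms)
  ultimately show ?thesis
    by (simp add: power2_norm_eq_inner inner_sum_left inner_sum_right inner_fourier_char_scaleC)
qed

definition fourier_coeff :: "(real \<Rightarrow> 'a::complex_hilbert) \<Rightarrow> int \<Rightarrow> 'a" where
  "fourier_coeff f m = integral {0..1} (\<lambda>t. fourier_char m t *\<^sub>C f t)"

lemma bessel_inequality:
  fixes f :: "real \<Rightarrow> 'a::complex_hilbert"
  assumes f: "continuous_on {0..1} f" and N: "finite N"
  shows "(\<Sum>m\<in>N. (norm (fourier_coeff f m))\<^sup>2) \<le> integral {0..1} (\<lambda>t. (norm (f t))\<^sup>2)"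
proof -
  define c where "c = fourier_coeff f"
  define s where "s t = (\<Sum>m\<in>N. fourier_char (- m) t *\<^sub>C c m)" for t
  have "((\<lambda>t. fourier_char m t *\<^sub>C f t) has_integral c m) {0..1}" for m
    unfolding c_def fourier_coeff_def
    by (intro integrable_integral integrable_continuous_real continuous_intros f)
  from has_integral_linear[OF this bounded_linear_inner_left]
  have "((\<lambda>t. inner (fourier_char m t *\<^sub>C f t) (c m)) has_integral (norm (c m))\<^sup>2) {0..1}" for m
    by (simp add: o_def power2_norm_eq_inner)
  moreover have "inner (f t) (fourier_char (- m) t *\<^sub>C c m) = inner (fourier_char m t *\<^sub>C f t) (c m)" for t m
    using inner_fourier_char_scaleC[of 0 t "f t" "- m" "c m"] by simp
  ultimately have "((\<lambda>t. inner (f t) (fourier_char (- m) t *\<^sub>C c m)) has_integral (norm (c m))\<^sup>2) {0..1}" for m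
    by presburger
  then have f_s: "((\<lambda>t. inner (f t) (s t)) has_integral (\<Sum>m\<in>N. (norm (c m))\<^sup>2)) {0..1}"
    unfolding s_def inner_sum_right by (intro has_integral_sum N)
  have f_f: "((\<lambda>t. (norm (f t))\<^sup>2) has_integral integral {0..1} (\<lambda>t. (norm (f t))\<^sup>2)) {0..1}"
    by (intro integrable_integral integrable_continuous_real continuous_intros f)
  have s_s: "((\<lambda>t. (norm (s t))\<^sup>2) has_integral (\<Sum>m\<in>N. (norm (c m))\<^sup>2)) {0..1}"
    unfolding s_def by (rule trig_poly_norm_has_integral[OF N])
  have "(norm (f t - s t))\<^sup>2 = (norm (f t))\<^sup>2 - 2 * inner (f t) (s t) + (norm (s t))\<^sup>2" for t
    by (simp add: power2_norm_eq_inner inner_diff_left inner_diff_right inner_commute)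
  then have "((\<lambda>t. (norm (f t - s t))\<^sup>2) has_integral
      (integral {0..1} (\<lambda>t. (norm (f t))\<^sup>2) - 2 * (\<Sum>m\<in>N. (norm (c m))\<^sup>2) + (\<Sum>m\<in>N. (norm (c m))\<^sup>2))) {0..1}"
    by (simp only:) (intro has_integral_add has_integral_diff has_integral_mult_right f_f f_s s_s)
  then have "0 \<le> integral {0..1} (\<lambda>t. (norm (f t))\<^sup>2) - 2 * (\<Sum>m\<in>N. (norm (c m))\<^sup>2) + (\<Sum>m\<in>N. (norm (c m))\<^sup>2)"
    by (rule has_integral_nonneg) simp
  then show ?thesis
    unfolding c_def by linarith
qed

lemma continuous_on_pointwise_lipschitz:
  assumes "\<And>z. z \<in> S \<Longrightarrow> \<exists>d>0. \<exists>C. \<forall>w\<in>S. dist w z < d \<longrightarrow> dist (f w) (f z) \<le> C * dist w z"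
  shows "continuous_on S f"
  unfolding continuous_on_iff
proof (intro ballI allI impI)
  fix z e assume "z \<in> S" "0 < (e::real)"
  then obtain d C where "d > 0" and lip: "\<forall>w\<in>S. dist w z < d \<longrightarrow> dist (f w) (f z) \<le> C * dist w z"
    using assms by blast
  define d' where "d' = min d (e / (\<bar>C\<bar> + 1))"
  have "dist (f w) (f z) < e" if "w \<in> S" "dist w z < d'" for w
  proof -
    have "dist (f w) (f z) \<le> (\<bar>C\<bar> + 1) * dist w z"
      using lip that by (smt (verit, best) d'_def mult_right_mono zero_le_dist)
    also have "\<dots> < (\<bar>C\<bar> + 1) * (e / (\<bar>C\<bar> + 1))"
      using that by (intro mult_strict_left_mono) (auto simp: d'_def)
    finally show ?thesis
      by simp
  qed
  moreover have "d' > 0"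
    using \<open>d > 0\<close> \<open>e > 0\<close> by (simp add: d'_def)
  ultimately show "\<exists>d>0. \<forall>w\<in>S. dist w z < d \<longrightarrow> dist (f w) (f z) < e"
    by blast
qed

lemma summable_on_cauchy_criterion:
  fixes f :: "'i \<Rightarrow> 'b::banach"
  assumes "\<And>e. e > 0 \<Longrightarrow> \<exists>F0. finite F0 \<and> F0 \<subseteq> A \<and>
             (\<forall>F. finite F \<and> F0 \<subseteq> F \<and> F \<subseteq> A \<longrightarrow> dist (sum f F) (sum f F0) < e)"
  shows "f summable_on A"
proof -
  have "cauchy_filter (filtermap (sum f) (finite_subsets_at_top A))"
    unfolding cauchy_filter_metric_filtermap
  proof (intro allI impI)
    fix e :: real assume "e > 0"
    then obtain F0 where F0: "finite F0" "F0 \<subseteq> A"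
      and near: "\<And>F. finite F \<Longrightarrow> F0 \<subseteq> F \<Longrightarrow> F \<subseteq> A \<Longrightarrow> dist (sum f F) (sum f F0) < e / 2"
      using assms[of "e / 2"] by auto
    have "eventually (\<lambda>F. finite F \<and> F0 \<subseteq> F \<and> F \<subseteq> A) (finite_subsets_at_top A)"
      unfolding eventually_finite_subsets_at_top using F0 by blast
    moreover have "dist (sum f F) (sum f F') < e"
      if "finite F \<and> F0 \<subseteq> F \<and> F \<subseteq> A" "finite F' \<and> F0 \<subseteq> F' \<and> F' \<subseteq> A" for F F'
      using near[of F] near[of F'] that dist_triangle_half_l by blast
    ultimately show "\<exists>P. eventually P (finite_subsets_at_top A) \<and>
        (\<forall>F F'. P F \<and> P F' \<longrightarrow> dist (sum f F) (sum f F') < e)"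
      by (intro exI[of _ "\<lambda>F. finite F \<and> F0 \<subseteq> F \<and> F \<subseteq> A"]) blast
  qed
  moreover have "complete (UNIV :: 'b set)"
    by (meson Cauchy_convergent UNIV_I complete_def convergent_def)
  ultimately obtain L where "(sum f \<longlongrightarrow> L) (finite_subsets_at_top A)"
    using complete_uniform[where S = UNIV] by (force simp add: filterlim_def)
  then show ?thesis
    unfolding summable_on_def has_sum_def by blast
qed

lemma summable_on_if_norm_sum_sq_le:
  fixes f :: "'i \<Rightarrow> 'b::banach"
  assumes h_nonneg: "\<And>x. x \<in> A \<Longrightarrow> 0 \<le> h x" and h: "h summable_on A" and "0 \<le> C"
    and bound: "\<And>F. finite F \<Longrightarrow> F \<subseteq> A \<Longrightarrow> (norm (sum f F))\<^sup>2 \<le> C * sum h F"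
  shows "f summable_on A"
proof (rule summable_on_cauchy_criterion)
  fix e :: real assume "e > 0"
  define d where "d = e\<^sup>2 / (C + 1)"
  have "C * d < e\<^sup>2"
    using \<open>e > 0\<close> \<open>0 \<le> C\<close> by (simp add: d_def field_simps)
  have "d > 0"
    using \<open>e > 0\<close> \<open>0 \<le> C\<close> by (simp add: d_def)
  then have "eventually (\<lambda>F. dist (sum h F) (infsum h A) < d) (finite_subsets_at_top A)"
    using has_sum_infsum[OF h] unfolding has_sum_def by (rule tendstoD[rotated])
  then obtain F0 where F0: "finite F0" "F0 \<subseteq> A" and close: "dist (sum h F0) (infsum h A) < d"
    unfolding eventually_finite_subsets_at_top by blast
  have "dist (sum f F) (sum f F0) < e" if F: "finite F" "F0 \<subseteq> F" "F \<subseteq> A" for F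
  proof -
    have "sum h F \<le> infsum h A"
      using F h h_nonneg by (intro finite_sum_le_infsum) auto
    then have "sum h (F - F0) < d"
      using close F by (simp add: sum_diff dist_real_def finite_subset)
    have "(dist (sum f F) (sum f F0))\<^sup>2 = (norm (sum f (F - F0)))\<^sup>2"
      using F by (simp add: dist_norm sum_diff finite_subset)
    also have "\<dots> \<le> C * sum h (F - F0)"
      using F by (intro bound) auto
    also have "\<dots> \<le> C * d"
      using \<open>sum h (F - F0) < d\<close> \<open>0 \<le> C\<close> by (intro mult_left_mono) auto
    also have "\<dots> < e\<^sup>2"
      by fact
    finally show ?thesis
      by (rule power2_less_imp_less) (use \<open>e > 0\<close> in simp)
  qed
  then show "\<exists>F0. finite F0 \<and> F0 \<subseteq> A \<and>
      (\<forall>F. finite F \<and> F0 \<subseteq> F \<and> F \<subseteq> A \<longrightarrow> dist (sum f F) (sum f F0) < e)"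
    using F0 by blast
qed

lemma has_sum_diff:
  fixes f g :: "'i \<Rightarrow> 'b::topological_ab_group_add"
  assumes "(f has_sum a) A" "(g has_sum b) A"
  shows "((\<lambda>x. f x - g x) has_sum (a - b)) A"
proof -
  have "((\<lambda>x. - g x) has_sum - b) A"
    using assms(2) by (simp add: has_sum_uminus)
  from has_sum_add[OF assms(1) this] show ?thesis
    by simp
qed

lemma sum_norm_sq_le_l2: "l2seq u \<Longrightarrow> finite F \<Longrightarrow> (\<Sum>n\<in>F. (norm (u n))\<^sup>2) \<le> (\<Sum>\<^sub>\<infinity>n. (norm (u n))\<^sup>2)"
  by (rule finite_sum_le_infsum) (auto simp: l2seq_def)

lemma l2seq_comparison:
  assumes "l2seq v" "\<And>n. norm (u n) \<le> c * norm (v n)"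
  shows "l2seq u"
  unfolding l2seq_def
proof (rule summable_on_comparison_test)
  show "(\<lambda>n. c\<^sup>2 * (norm (v n))\<^sup>2) summable_on UNIV"
    using assms(1) by (intro summable_on_cmult_right) (simp add: l2seq_def)
  show "(norm (u n))\<^sup>2 \<le> c\<^sup>2 * (norm (v n))\<^sup>2" for n
    using power_mono[OF assms(2)[of n] norm_ge_zero] by (simp add: power_mult_distrib)
qed simp

lemma l2seq_add_diff:
  assumes "l2seq (v::int \<Rightarrow> 'b::real_normed_vector)" "l2seq w"
  shows "l2seq (\<lambda>n. v n + w n)" "l2seq (\<lambda>n. v n - w n)"
proof -
  have sum: "(\<lambda>n. 2 * (norm (v n))\<^sup>2 + 2 * (norm (w n))\<^sup>2) summable_on UNIV"
    using assms by (intro summable_on_add summable_on_cmult_right) (auto simp: l2seq_def)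
  have bound: "(norm a)\<^sup>2 \<le> 2 * (norm x)\<^sup>2 + 2 * (norm y)\<^sup>2" if "norm a \<le> norm x + norm y" for a x y :: 'b
  proof -
    have "(norm a)\<^sup>2 \<le> (norm x + norm y)\<^sup>2"
      using that by (intro power_mono) auto
    also have "\<dots> \<le> 2 * (norm x)\<^sup>2 + 2 * (norm y)\<^sup>2"
      by (smt (verit) power2_sum sum_squares_bound)
    finally show ?thesis .
  qed
  show "l2seq (\<lambda>n. v n + w n)"
    unfolding l2seq_def
    by (rule summable_on_comparison_test[OF sum]) (auto intro!: bound norm_triangle_ineq)
  show "l2seq (\<lambda>n. v n - w n)"
    unfolding l2seq_def
    by (rule summable_on_comparison_test[OF sum]) (auto intro!: bound norm_triangle_ineq4)
qed

lemma l2seq_delta_m1: "l2seq (delta_m1 (\<xi>::'a::real_normed_vector))"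
  unfolding l2seq_def
  by (rule finite_nonzero_values_imp_summable_on, rule finite_subset[of _ "{-1}"])
    (auto simp: delta_m1_def)

lemma l2seq_tendsto_0:
  assumes "l2seq v" "inj f"
  shows "(\<lambda>j::nat. v (f j)) \<longlonglongrightarrow> 0"
proof -
  have "(\<lambda>k. (norm (v k))\<^sup>2) summable_on range f"
    using assms(1) summable_on_subset_banach unfolding l2seq_def by blast
  then have "(\<lambda>j. (norm (v (f j)))\<^sup>2) summable_on UNIV"
    using summable_on_reindex[of f UNIV "\<lambda>k. (norm (v k))\<^sup>2"] assms(2) by (simp add: o_def)
  then have "summable (\<lambda>j. (norm (v (f j)))\<^sup>2)"
    by (rule summable_on_imp_summable)
  then have "(\<lambda>j. sqrt ((norm (v (f j)))\<^sup>2)) \<longlonglongrightarrow> sqrt 0"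
    by (intro tendsto_real_sqrt summable_LIMSEQ_zero)
  then have "(\<lambda>j. norm (v (f j))) \<longlonglongrightarrow> 0"
    by simp
  then show ?thesis
    unfolding tendsto_norm_zero_iff .
qed

lemma l2norm_eq_0D:
  assumes "l2seq u" "l2norm u \<le> 0"
  shows "u n = 0"
proof -
  have "(\<Sum>\<^sub>\<infinity>n. (norm (u n))\<^sup>2) \<le> 0"
    using assms(2) infsum_nonneg[of UNIV "\<lambda>n. (norm (u n))\<^sup>2"] by (simp add: l2norm_def)
  then have "(norm (u n))\<^sup>2 = 0"
    using assms(1) by (intro nonneg_infsum_le_0D[of "\<lambda>n. (norm (u n))\<^sup>2" UNIV]) (auto simp: l2seq_def)
  then show ?thesis
    by simp
qed

lemma l2norm_chi_nonneg_le:
  assumes "l2seq u"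
  shows "l2norm (chi_nonneg u) \<le> l2norm u"
  unfolding l2norm_def
proof (intro real_sqrt_le_mono infsum_mono)
  show "(\<lambda>n. (norm (chi_nonneg u n))\<^sup>2) summable_on UNIV"
    using l2seq_comparison[OF assms, of "chi_nonneg u" 1] by (simp add: chi_nonneg_def l2seq_def)
qed (use assms in \<open>auto simp: chi_nonneg_def l2seq_def\<close>)

section \<open>The resolvent on the unit circle\<close>

locale hyperbolic_operator =
  fixes A :: "'a::complex_hilbert \<Rightarrow> 'a"
  assumes bounded_clinear_A: "bounded_clinear_op A"
    and hyperbolic_A: "hyperbolic A"
begin

abbreviation R :: "complex \<Rightarrow> 'a \<Rightarrow> 'a" where
  "R \<equiv> resolvent A"

lemma bounded_linear_A: "bounded_linear A"
  using bounded_clinear_A by (simp add: bounded_clinear_op_def)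

lemma linear_A: "linear A"
  using bounded_linear_A by (rule bounded_linear.linear)

lemma A_scaleC: "A (c *\<^sub>C x) = c *\<^sub>C A x"
  using bounded_clinear_A by (simp add: bounded_clinear_op_def)

lemma resolvent_on_circle:
  assumes "z \<in> sphere 0 1"
  shows "bounded_clinear_op (R z)" "z *\<^sub>C R z x - A (R z x) = x" "R z (z *\<^sub>C x - A x) = x"
proof -
  have "z \<notin> spectrum A"
    using hyperbolic_A assms unfolding hyperbolic_def by blast
  then obtain B where B: "bounded_clinear_op B" "B \<circ> zminus z A = id" "zminus z A \<circ> B = id"
    unfolding spectrum_def by blast
  have "R z = B"
    unfolding resolvent_def by (rule inv_unique_comp[OF B(3) B(2)])
  then show "bounded_clinear_op (R z)" "z *\<^sub>C R z x - A (R z x) = x" "R z (z *\<^sub>C x - A x) = x"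
    unfolding \<open>R z = B\<close> using B by (auto simp: zminus_def fun_eq_iff)
qed

lemma bounded_linear_resolvent: "z \<in> sphere 0 1 \<Longrightarrow> bounded_linear (R z)"
  using resolvent_on_circle(1) by (simp add: bounded_clinear_op_def)

lemma linear_resolvent: "z \<in> sphere 0 1 \<Longrightarrow> linear (R z)"
  using bounded_linear_resolvent bounded_linear.linear by blast

lemma resolvent_scaleC: "z \<in> sphere 0 1 \<Longrightarrow> R z (c *\<^sub>C x) = c *\<^sub>C R z x"
  using resolvent_on_circle(1) by (simp add: bounded_clinear_op_def)

lemma norm_resolvent_le: "z \<in> sphere 0 1 \<Longrightarrow> norm (R z x) \<le> onorm (R z) * norm x"
  by (rule onorm[OF bounded_linear_resolvent])

lemma onorm_resolvent_nonneg: "z \<in> sphere 0 1 \<Longrightarrow> 0 \<le> onorm (R z)"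
  by (rule onorm_pos_le[OF bounded_linear_resolvent])

lemma resolvent_identity:
  assumes z: "z \<in> sphere 0 1" and w: "w \<in> sphere 0 1"
  shows "R z x - R w x = (w - z) *\<^sub>C R z (R w x)"
proof -
  define y where "y = R w x"
  have "x = (w - z) *\<^sub>C y + (z *\<^sub>C y - A y)"
    using resolvent_on_circle(2)[OF w, of x] scaleC_add_left[of "w - z" z y]
    by (simp add: y_def algebra_simps)
  then have "R z x = (w - z) *\<^sub>C R z y + y"
    by (metis linear_add[OF linear_resolvent[OF z]] resolvent_scaleC[OF z] resolvent_on_circle(3)[OF z])
  then show ?thesis
    by (simp add: y_def)
qed

lemma resolvent_near:
  assumes z: "z \<in> sphere 0 1" and w: "w \<in> sphere 0 1"
    and small: "cmod (w - z) < 1 / (2 * (onorm (R z) + 1))"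
  shows "norm (R w x - R z x) \<le> 2 * (onorm (R z))\<^sup>2 * cmod (w - z) * norm x"
proof -
  let ?K = "onorm (R z)"
  have K: "0 \<le> ?K"
    by (rule onorm_resolvent_nonneg[OF z])
  have "cmod (w - z) * ?K \<le> 1 / (2 * (?K + 1)) * (?K + 1)"
    using small K by (intro mult_mono) auto
  also have "\<dots> = 1 / 2"
    using K by (simp add: field_simps)
  finally have small': "cmod (w - z) * ?K \<le> 1 / 2" .
  have diff: "norm (R w x - R z x) = cmod (w - z) * norm (R z (R w x))"
    using resolvent_identity[OF z w, of x] by (metis norm_minus_commute norm_scaleC)
  have "norm (R w x) \<le> norm (R z x) + norm (R w x - R z x)"
    by (metis add.commute diff_add_cancel norm_triangle_ineq)
  also have "\<dots> \<le> ?K * norm x + cmod (w - z) * (?K * norm (R w x))"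
    unfolding diff by (intro add_mono mult_left_mono norm_resolvent_le z) auto
  also have "\<dots> \<le> ?K * norm x + 1 / 2 * norm (R w x)"
    using mult_right_mono[OF small' norm_ge_zero[of "R w x"]] by (simp add: mult.assoc)
  finally have Rw: "norm (R w x) \<le> 2 * ?K * norm x"
    by simp
  have "norm (R w x - R z x) \<le> cmod (w - z) * (?K * (2 * ?K * norm x))"
    unfolding diff
    by (intro mult_left_mono order_trans[OF norm_resolvent_le[OF z]] Rw K) auto
  then show ?thesis
    by (simp add: power2_eq_square algebra_simps)
qed

lemma onorm_resolvent_near:
  assumes z: "z \<in> sphere 0 1" and w: "w \<in> sphere 0 1"
    and small: "cmod (w - z) < 1 / (2 * (onorm (R z) + 1))"
  shows "\<bar>onorm (R w) - onorm (R z)\<bar> \<le> 2 * (onorm (R z))\<^sup>2 * cmod (w - z)"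
proof -
  let ?d = "2 * (onorm (R z))\<^sup>2 * cmod (w - z)"
  have "norm (R w x) \<le> (onorm (R z) + ?d) * norm x" for x
    using resolvent_near[OF z w small, of x] norm_resolvent_le[OF z, of x]
      norm_triangle_ineq2[of "R w x" "R z x"]
    by (simp add: algebra_simps)
  then have "onorm (R w) \<le> onorm (R z) + ?d"
    by (intro onorm_bound) (auto intro!: add_nonneg_nonneg onorm_resolvent_nonneg z)
  moreover have "norm (R z x) \<le> (onorm (R w) + ?d) * norm x" for x
    using resolvent_near[OF z w small, of x] norm_resolvent_le[OF w, of x]
      norm_triangle_ineq3[of "R w x" "R z x"] norm_minus_commute[of "R w x" "R z x"]
    by (simp add: algebra_simps)
  then have "onorm (R z) \<le> onorm (R w) + ?d"
    by (intro onorm_bound) (auto intro!: add_nonneg_nonneg onorm_resolvent_nonneg w)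
  ultimately show ?thesis
    by linarith
qed

lemma continuous_on_onorm_resolvent: "continuous_on (sphere 0 1) (\<lambda>z. onorm (R z))"
proof (rule continuous_on_pointwise_lipschitz)
  fix z :: complex assume z: "z \<in> sphere 0 1"
  then show "\<exists>d>0. \<exists>C. \<forall>w\<in>sphere 0 1. dist w z < d \<longrightarrow> dist (onorm (R w)) (onorm (R z)) \<le> C * dist w z"
    using onorm_resolvent_near[OF z] onorm_resolvent_nonneg[OF z]
    by (intro exI[of _ "1 / (2 * (onorm (R z) + 1))"] conjI exI[of _ "2 * (onorm (R z))\<^sup>2"])
      (auto simp: dist_norm)
qed

lemma continuous_on_resolvent: "continuous_on (sphere 0 1) (\<lambda>z. R z x)"
proof (rule continuous_on_pointwise_lipschitz)
  fix z :: complex assume z: "z \<in> sphere 0 1"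
  then show "\<exists>d>0. \<exists>C. \<forall>w\<in>sphere 0 1. dist w z < d \<longrightarrow> dist (R w x) (R z x) \<le> C * dist w z"
    using resolvent_near[OF z] onorm_resolvent_nonneg[OF z]
    by (intro exI[of _ "1 / (2 * (onorm (R z) + 1))"] conjI exI[of _ "2 * (onorm (R z))\<^sup>2 * norm x"])
      (auto simp: dist_norm mult.commute mult.left_commute)
qed

lemma onorm_resolvent_le_M1: "z \<in> sphere 0 1 \<Longrightarrow> onorm (R z) \<le> M1 A"
  unfolding M1_def
  by (intro cSUP_upper bounded_imp_bdd_above compact_imp_bounded compact_continuous_image
      continuous_on_onorm_resolvent compact_sphere)

lemma M1_nonneg: "0 \<le> M1 A"
  using onorm_resolvent_le_M1[of 1] onorm_resolvent_nonneg[of 1] by simp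

lemma norm_resolvent_le_M1: "z \<in> sphere 0 1 \<Longrightarrow> norm (R z x) \<le> M1 A * norm x"
  by (meson norm_resolvent_le onorm_resolvent_le_M1 mult_right_mono norm_ge_zero order_trans)

subsection \<open>The Green kernel of tau - A\<close>

definition green :: "int \<Rightarrow> 'a \<Rightarrow> 'a" where
  "green m x = fourier_coeff (\<lambda>t. R (fourier_char 1 t) x) m"

lemma continuous_on_resolvent_fourier_char: "continuous_on S (\<lambda>t. R (fourier_char 1 t) x)"
  by (rule continuous_on_compose2[OF continuous_on_resolvent continuous_on_fourier_char]) auto

lemma green_has_integral:
  "((\<lambda>t. fourier_char m t *\<^sub>C R (fourier_char 1 t) x) has_integral green m x) {0..1}"
  unfolding green_def fourier_coeff_def
  by (intro integrable_integral integrable_continuous_real continuous_intros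
      continuous_on_resolvent_fourier_char)

lemma green_eqI:
  "((\<lambda>t. fourier_char m t *\<^sub>C R (fourier_char 1 t) x) has_integral y) {0..1} \<Longrightarrow> green m x = y"
  using green_has_integral has_integral_unique by blast

lemma fourier_char_succ_scaleC:
  "fourier_char (m + 1) t *\<^sub>C y = fourier_char m t *\<^sub>C (fourier_char 1 t *\<^sub>C y)"
  by (simp add: scaleC_scaleC fourier_char_mult)

lemma green_succ_minus_A_green: "green (m + 1) x - A (green m x) = (if m = 0 then x else 0)"
proof -
  have "((\<lambda>t. A (fourier_char m t *\<^sub>C R (fourier_char 1 t) x)) has_integral A (green m x)) {0..1}"
    using has_integral_linear[OF green_has_integral bounded_linear_A] by (simp add: o_def)
  from has_integral_diff[OF green_has_integral this]
  have "((\<lambda>t. fourier_char (m + 1) t *\<^sub>C R (fourier_char 1 t) x - A (fourier_char m t *\<^sub>C R (fourier_char 1 t) x))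
      has_integral (green (m + 1) x - A (green m x))) {0..1}" .
  moreover have "fourier_char (m + 1) t *\<^sub>C R (fourier_char 1 t) x - A (fourier_char m t *\<^sub>C R (fourier_char 1 t) x)
      = fourier_char m t *\<^sub>C x" for t
    using resolvent_on_circle(2)[OF fourier_char_in_sphere[of 1 t], of x]
    by (simp add: fourier_char_succ_scaleC A_scaleC flip: scaleC_diff_right)
  ultimately have "((\<lambda>t. fourier_char m t *\<^sub>C x) has_integral (green (m + 1) x - A (green m x))) {0..1}"
    by simp
  then show ?thesis
    using fourier_char_scaleC_has_integral has_integral_unique by blast
qed

lemma green_succ_minus_green_A: "green (m + 1) x - green m (A x) = (if m = 0 then x else 0)"
proof -
  from has_integral_diff[OF green_has_integral green_has_integral]
  have "((\<lambda>t. fourier_char (m + 1) t *\<^sub>C R (fourier_char 1 t) x - fourier_char m t *\<^sub>C R (fourier_char 1 t) (A x))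
      has_integral (green (m + 1) x - green m (A x))) {0..1}" .
  moreover have "fourier_char (m + 1) t *\<^sub>C R (fourier_char 1 t) x - fourier_char m t *\<^sub>C R (fourier_char 1 t) (A x)
      = fourier_char m t *\<^sub>C x" for t
    using resolvent_on_circle(3)[OF fourier_char_in_sphere[of 1 t], of x]
    by (simp add: fourier_char_succ_scaleC resolvent_scaleC linear_diff[OF linear_resolvent]
        flip: scaleC_diff_right)
  ultimately have "((\<lambda>t. fourier_char m t *\<^sub>C x) has_integral (green (m + 1) x - green m (A x))) {0..1}"
    by simp
  then show ?thesis
    using fourier_char_scaleC_has_integral has_integral_unique by blast
qed

lemma A_green: "A (green m x) = green m (A x)"
  using green_succ_minus_A_green[of m x] green_succ_minus_green_A[of m x] by (simp add: algebra_simps)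

lemma norm_green_le: "norm (green m x) \<le> M1 A * norm x"
proof -
  have "norm (integral {0..1} (\<lambda>t. fourier_char m t *\<^sub>C R (fourier_char 1 t) x))
      \<le> integral {0..1} (\<lambda>t::real. M1 A * norm x)"
    by (intro integral_norm_bound_integral integrable_continuous_real continuous_intros
        continuous_on_resolvent_fourier_char)
      (auto simp: norm_scaleC norm_resolvent_le_M1)
  then show ?thesis
    by (simp add: green_def fourier_coeff_def)
qed

lemma bounded_linear_green: "bounded_linear (green m)"
proof (rule bounded_linear_intro[where K = "M1 A"])
  show "green m (x + y) = green m x + green m y" for x y
    using has_integral_add[OF green_has_integral[of m x] green_has_integral[of m y]]
    by (intro green_eqI)
      (simp add: linear_add[OF linear_resolvent] scaleC_add_right)
  show "green m (r *\<^sub>R x) = r *\<^sub>R green m x" for r x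
    using has_integral_cmul[OF green_has_integral[of m x], of r]
    by (intro green_eqI)
      (simp add: linear_scale[OF linear_resolvent] scaleC_scaleR_commute)
  show "norm (green m x) \<le> norm x * M1 A" for x
    using norm_green_le by (simp add: mult.commute)
qed

lemma linear_green: "linear (green m)"
  using bounded_linear_green by (rule bounded_linear.linear)

text \<open>The inner sums are the Fourier coefficients of t \<mapsto> R (e^{2 pi i t}) applied to the
  trigonometric polynomial sum_k e^{-2 pi i k t} g_k; apply Bessel's inequality to them.\<close>
lemma green_convolution_finite_le:
  assumes S: "finite S" and N: "finite N"
  shows "(\<Sum>n\<in>N. (norm (\<Sum>k\<in>S. green (n - k) (g k)))\<^sup>2) \<le> (M1 A)\<^sup>2 * (\<Sum>k\<in>S. (norm (g k))\<^sup>2)"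
proof -
  define s where "s t = (\<Sum>k\<in>S. fourier_char (- k) t *\<^sub>C g k)" for t
  define h where "h t = R (fourier_char 1 t) (s t)" for t
  have h_sum: "h t = (\<Sum>k\<in>S. fourier_char (- k) t *\<^sub>C R (fourier_char 1 t) (g k))" for t
    by (simp add: h_def s_def linear_sum[OF linear_resolvent] resolvent_scaleC)
  have "continuous_on {0..1} h"
    unfolding h_sum by (intro continuous_intros continuous_on_resolvent_fourier_char)
  moreover have "fourier_coeff h n = (\<Sum>k\<in>S. green (n - k) (g k))" for n
  proof -
    have "((\<lambda>t. fourier_char n t *\<^sub>C h t) has_integral (\<Sum>k\<in>S. green (n - k) (g k))) {0..1}"
      unfolding h_sum linear_sum[OF bounded_linear.linear[OF bounded_linear_scaleC_right]]
      by (simp add: scaleC_scaleC fourier_char_mult) (intro has_integral_sum S green_has_integral)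
    then show ?thesis
      unfolding fourier_coeff_def by (rule integral_unique)
  qed
  ultimately have "(\<Sum>n\<in>N. (norm (\<Sum>k\<in>S. green (n - k) (g k)))\<^sup>2) \<le> integral {0..1} (\<lambda>t. (norm (h t))\<^sup>2)"
    using bessel_inequality[OF _ N, of h] by simp
  also have "\<dots> \<le> integral {0..1} (\<lambda>t. (M1 A)\<^sup>2 * (norm (s t))\<^sup>2)"
  proof (rule integral_le)
    show "(\<lambda>t. (norm (h t))\<^sup>2) integrable_on {0..1}"
      by (intro integrable_continuous_real continuous_intros \<open>continuous_on {0..1} h\<close>)
    show "(\<lambda>t. (M1 A)\<^sup>2 * (norm (s t))\<^sup>2) integrable_on {0..1}"
      using has_integral_mult_right[OF trig_poly_norm_has_integral[OF S, of g]]
      unfolding s_def by blast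
    show "(norm (h t))\<^sup>2 \<le> (M1 A)\<^sup>2 * (norm (s t))\<^sup>2" for t
      using norm_resolvent_le_M1[OF fourier_char_in_sphere, of 1 t "s t"]
      by (metis h_def norm_ge_zero power_mono power_mult_distrib)
  qed
  also have "\<dots> = (M1 A)\<^sup>2 * (\<Sum>k\<in>S. (norm (g k))\<^sup>2)"
    using has_integral_mult_right[OF trig_poly_norm_has_integral[OF S, of g]]
    unfolding s_def by (rule integral_unique)
  finally show ?thesis .
qed

definition green_conv :: "(int \<Rightarrow> 'a) \<Rightarrow> int \<Rightarrow> 'a" where
  "green_conv g n = (\<Sum>\<^sub>\<infinity>k. green (n - k) (g k))"

lemma summable_on_green_conv:
  assumes "l2seq g"
  shows "(\<lambda>k. green (n - k) (g k)) summable_on B"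
proof -
  have "(\<lambda>k. green (n - k) (g k)) summable_on UNIV"
  proof (rule summable_on_if_norm_sum_sq_le[where h = "\<lambda>k. (norm (g k))\<^sup>2" and C = "(M1 A)\<^sup>2"])
    show "(\<lambda>k. (norm (g k))\<^sup>2) summable_on UNIV"
      using assms by (simp add: l2seq_def)
    show "(norm (\<Sum>k\<in>F. green (n - k) (g k)))\<^sup>2 \<le> (M1 A)\<^sup>2 * (\<Sum>k\<in>F. (norm (g k))\<^sup>2)" if "finite F" for F
      using green_convolution_finite_le[OF that, of "{n}" g] by simp
  qed auto
  then show ?thesis
    by (rule summable_on_subset_banach) auto
qed

lemma green_conv_has_sum: "l2seq g \<Longrightarrow> ((\<lambda>k. green (n - k) (g k)) has_sum green_conv g n) UNIV"
  unfolding green_conv_def by (rule has_sum_infsum[OF summable_on_green_conv])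

lemma sum_norm_green_conv_le:
  assumes g: "l2seq g" and N: "finite N"
  shows "(\<Sum>n\<in>N. (norm (green_conv g n))\<^sup>2) \<le> (M1 A)\<^sup>2 * (\<Sum>\<^sub>\<infinity>k. (norm (g k))\<^sup>2)"
proof (rule tendsto_upperbound)
  show "((\<lambda>F. \<Sum>n\<in>N. (norm (\<Sum>k\<in>F. green (n - k) (g k)))\<^sup>2) \<longlongrightarrow> (\<Sum>n\<in>N. (norm (green_conv g n))\<^sup>2))
      (finite_subsets_at_top UNIV)"
    using green_conv_has_sum[OF g] unfolding has_sum_def
    by (intro tendsto_sum tendsto_power tendsto_norm)
  show "\<forall>\<^sub>F F in finite_subsets_at_top UNIV.
      (\<Sum>n\<in>N. (norm (\<Sum>k\<in>F. green (n - k) (g k)))\<^sup>2) \<le> (M1 A)\<^sup>2 * (\<Sum>\<^sub>\<infinity>k. (norm (g k))\<^sup>2)"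
  proof (rule eventually_finite_subsets_at_top_weakI)
    fix F :: "int set" assume F: "finite F"
    have "(\<Sum>n\<in>N. (norm (\<Sum>k\<in>F. green (n - k) (g k)))\<^sup>2) \<le> (M1 A)\<^sup>2 * (\<Sum>k\<in>F. (norm (g k))\<^sup>2)"
      by (rule green_convolution_finite_le[OF F N])
    also have "\<dots> \<le> (M1 A)\<^sup>2 * (\<Sum>\<^sub>\<infinity>k. (norm (g k))\<^sup>2)"
      by (intro mult_left_mono sum_norm_sq_le_l2 g F) auto
    finally show "(\<Sum>n\<in>N. (norm (\<Sum>k\<in>F. green (n - k) (g k)))\<^sup>2) \<le> (M1 A)\<^sup>2 * (\<Sum>\<^sub>\<infinity>k. (norm (g k))\<^sup>2)" .
  qed
qed (simp add: finite_subsets_at_top_neq_bot)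

lemma l2seq_green_conv:
  assumes "l2seq g"
  shows "l2seq (green_conv g)"
  unfolding l2seq_def
  by (rule nonneg_bdd_above_summable_on) (auto intro!: bdd_aboveI2 sum_norm_green_conv_le[OF assms])

lemma l2norm_green_conv_le:
  assumes "l2seq g"
  shows "l2norm (green_conv g) \<le> M1 A * l2norm g"
proof -
  have "(\<Sum>\<^sub>\<infinity>n. (norm (green_conv g n))\<^sup>2) \<le> (M1 A)\<^sup>2 * (\<Sum>\<^sub>\<infinity>k. (norm (g k))\<^sup>2)"
    using l2seq_green_conv[OF assms] unfolding l2seq_def
    by (rule infsum_le_finite_sums) (rule sum_norm_green_conv_le[OF assms])
  then have "l2norm (green_conv g) \<le> sqrt ((M1 A)\<^sup>2 * (\<Sum>\<^sub>\<infinity>k. (norm (g k))\<^sup>2))"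
    unfolding l2norm_def by (rule real_sqrt_le_mono)
  then show ?thesis
    by (simp add: l2norm_def real_sqrt_mult M1_nonneg)
qed

lemma green_conv_succ_minus_A: "l2seq g \<Longrightarrow> green_conv g (n + 1) - A (green_conv g n) = g n"
proof -
  assume g: "l2seq g"
  have "((\<lambda>k. green (n + 1 - k) (g k) - A (green (n - k) (g k))) has_sum (green_conv g (n + 1) - A (green_conv g n))) UNIV"
    using has_sum_diff[OF green_conv_has_sum[OF g] has_sum_bounded_linear[OF bounded_linear_A green_conv_has_sum[OF g]]]
    by simp
  moreover have "green (n + 1 - k) (g k) - A (green (n - k) (g k)) = (if k = n then g n else 0)" for k
    using green_succ_minus_A_green[of "n - k" "g k"] by (simp add: algebra_simps)
  ultimately have "((\<lambda>k. if k = n then g n else 0) has_sum (green_conv g (n + 1) - A (green_conv g n))) UNIV"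
    by simp
  moreover have "((\<lambda>k. if k = n then g n else 0) has_sum g n) UNIV"
    by (rule has_sum_finiteI[where A = "{n}", THEN has_sum_cong_neutral[THEN iffD1, rotated 3]]) auto
  ultimately show ?thesis
    using has_sum_unique by blast
qed

text \<open>If v (n + 1) = A (v n), the sequence c k = green (n - k + 1) (v k) is constant on k \<le> n and on
  k > n, jumps by v n in between, and is dominated by M1 * norm (v k), which tends to 0 at both ends.\<close>
lemma l2seq_orbit_eq_0:
  assumes v: "l2seq v" and orbit: "\<And>n. v (n + 1) = A (v n)"
  shows "v n = 0"
proof -
  define c where "c k = green (n - k + 1) (v k)" for k
  have step: "c (k + 1) = c k - (if k = n then v k else 0)" for k
  proof -
    have "c (k + 1) = green (n - k) (A (v k))"
      unfolding c_def orbit by simp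
    also have "\<dots> = green (n - k + 1) (v k) - (if n - k = 0 then v k else 0)"
      using green_succ_minus_green_A[of "n - k" "v k"] by (simp add: algebra_simps)
    finally show ?thesis
      unfolding c_def by simp
  qed
  have below: "c (n - int j) = c n" for j :: nat
  proof (induction j)
    case (Suc j)
    then show ?case
      using step[of "n - int (Suc j)"] by simp
  qed simp
  have above: "c (n + 1 + int j) = c (n + 1)" for j :: nat
  proof (induction j)
    case (Suc j)
    then show ?case
      using step[of "n + 1 + int j"] by (simp add: algebra_simps)
  qed simp
  have c_tendsto: "(\<lambda>j. c (f j)) \<longlonglongrightarrow> 0" if "inj f" for f :: "nat \<Rightarrow> int"
  proof (rule Lim_null_comparison)
    show "\<forall>\<^sub>F j in sequentially. norm (c (f j)) \<le> M1 A * norm (v (f j))"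
      by (simp add: c_def norm_green_le)
    show "(\<lambda>j. M1 A * norm (v (f j))) \<longlonglongrightarrow> 0"
      using tendsto_mult_right_zero[OF tendsto_norm_zero[OF l2seq_tendsto_0[OF v that]]] .
  qed
  have "c n = 0"
    using c_tendsto[of "\<lambda>j. n - int j"] below by (simp add: inj_def LIMSEQ_const_iff)
  moreover have "c (n + 1) = 0"
    using c_tendsto[of "\<lambda>j. n + 1 + int j"] above by (simp add: inj_def LIMSEQ_const_iff)
  ultimately show ?thesis
    using step[of n] by simp
qed

lemma l2seq_shift_solution_unique:
  assumes "l2seq v" "l2seq w" "\<And>n. v (n + 1) - A (v n) = w (n + 1) - A (w n)"
  shows "v = w"
proof
  fix n
  have "(\<lambda>n. v n - w n) n = 0"
  proof (rule l2seq_orbit_eq_0)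
    show "l2seq (\<lambda>n. v n - w n)"
      using l2seq_add_diff assms by blast
    show "v (n + 1) - w (n + 1) = A (v n - w n)" for n
      using assms(3)[of n] by (simp add: linear_diff[OF linear_A] algebra_simps)
  qed
  then show "v n = w n"
    by simp
qed

lemma shift_minus_inv_eq_green_conv:
  assumes g: "l2seq g"
  shows "shift_minus_inv A g = green_conv g"
  unfolding shift_minus_inv_def
proof (rule the_equality)
  show "l2seq (green_conv g) \<and> (\<forall>n. green_conv g (n + 1) - A (green_conv g n) = g n)"
    using l2seq_green_conv[OF g] green_conv_succ_minus_A[OF g] by blast
  show "v = green_conv g" if "l2seq v \<and> (\<forall>n. v (n + 1) - A (v n) = g n)" for v
    using that l2seq_green_conv[OF g] green_conv_succ_minus_A[OF g]
    by (intro l2seq_shift_solution_unique) auto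
qed

lemma green_conv_diff:
  assumes "l2seq a" "l2seq b"
  shows "green_conv a n - green_conv b n = green_conv (\<lambda>k. a k - b k) n"
proof -
  have "((\<lambda>k. green (n - k) (a k - b k)) has_sum (green_conv a n - green_conv b n)) UNIV"
    using has_sum_diff[OF green_conv_has_sum[OF assms(1)] green_conv_has_sum[OF assms(2)]]
    by (simp add: linear_diff[OF linear_green])
  then show ?thesis
    unfolding green_conv_def by (simp add: infsumI)
qed

subsection \<open>Riesz projections\<close>

lemma riesz_P_eq_green: "riesz_P A x = green 1 x"
proof -
  let ?c = "2 * complex_of_real pi * \<i>"
  have "integral {0..1} (\<lambda>t. vector_derivative (circlepath 0 1) (at t within {0..1}) *\<^sub>C R (circlepath 0 1 t) x)
      = integral {0..1} (\<lambda>t. ?c *\<^sub>C (fourier_char 1 t *\<^sub>C R (fourier_char 1 t) x))"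
    using vector_derivative_circlepath01[of _ 0 1]
    by (intro integral_cong) (simp add: circlepath_eq_fourier_char scaleC_scaleC fourier_char_def)
  also have "\<dots> = ?c *\<^sub>C green 1 x"
    using has_integral_linear[OF green_has_integral bounded_linear_scaleC_right]
    by (intro integral_unique) (simp add: o_def)
  finally show ?thesis
    by (simp add: riesz_P_def scaleC_scaleC)
qed

lemma bounded_linear_riesz_P: "bounded_linear (riesz_P A)"
  using bounded_linear_green[of 1] by (simp add: riesz_P_eq_green[abs_def])

lemma bounded_linear_riesz_Q: "bounded_linear (riesz_Q A)"
  using bounded_linear_sub[OF bounded_linear_ident bounded_linear_riesz_P]
  by (simp add: riesz_Q_def[abs_def])

lemma linear_riesz_P: "linear (riesz_P A)"
  using bounded_linear_riesz_P by (rule bounded_linear.linear)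

lemma l2seq_green: "l2seq (\<lambda>m. green m x)"
  unfolding l2seq_def
proof (rule nonneg_bdd_above_summable_on)
  show "bdd_above (sum (\<lambda>m. (norm (green m x))\<^sup>2) ` {F. F \<subseteq> UNIV \<and> finite F})"
    using green_convolution_finite_le[of "{0}" _ "\<lambda>_. x"] by (intro bdd_aboveI2) auto
qed simp

text \<open>Both m \<mapsto> riesz_P A (green m x) and m \<mapsto> green m (riesz_P A x) solve this recurrence.\<close>
lemma green_shift_solution_riesz_P:
  assumes "l2seq v" "\<And>m. v (m + 1) - A (v m) = (if m = 0 then riesz_P A x else 0)"
  shows "v m = (if 1 \<le> m then green m x else 0)"
proof -
  have "v = (\<lambda>m. if 1 \<le> m then green m x else 0)"
  proof (rule l2seq_shift_solution_unique[OF assms(1)])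
    show "l2seq (\<lambda>m. if 1 \<le> m then green m x else 0)"
      by (rule l2seq_comparison[OF l2seq_green, of _ 1 x]) auto
    show "v (m + 1) - A (v m) =
        (if 1 \<le> m + 1 then green (m + 1) x else 0) - A (if 1 \<le> m then green m x else 0)" for m
      using assms(2)[of m] green_succ_minus_A_green[of m x]
      by (auto simp: riesz_P_eq_green linear_0[OF linear_A])
  qed
  then show ?thesis
    by simp
qed

lemma riesz_P_green: "riesz_P A (green m x) = (if 1 \<le> m then green m x else 0)"
proof (rule green_shift_solution_riesz_P[where v = "\<lambda>m. riesz_P A (green m x)"])
  show "l2seq (\<lambda>m. riesz_P A (green m x))"
    by (rule l2seq_comparison[OF l2seq_green, of _ "M1 A" x]) (simp add: riesz_P_eq_green norm_green_le)
  show "riesz_P A (green (m + 1) x) - A (riesz_P A (green m x)) = (if m = 0 then riesz_P A x else 0)" for m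
    using green_succ_minus_A_green[of m x]
    by (auto simp: riesz_P_eq_green A_green linear_0[OF linear_green] simp flip: linear_diff[OF linear_green])
qed

lemma green_riesz_P: "green m (riesz_P A x) = (if 1 \<le> m then green m x else 0)"
  by (rule green_shift_solution_riesz_P[OF l2seq_green green_succ_minus_A_green])

lemma riesz_P_idem: "riesz_P A (riesz_P A x) = riesz_P A x"
  using riesz_P_green[of 1 x] by (simp add: riesz_P_eq_green)

lemma riesz_Q_green: "riesz_Q A (green m x) = (if 1 \<le> m then 0 else green m x)"
  by (simp add: riesz_Q_def riesz_P_green)

lemma range_riesz_Q_iff: "x \<in> range (riesz_Q A) \<longleftrightarrow> riesz_P A x = 0"
proof
  assume "x \<in> range (riesz_Q A)"
  then show "riesz_P A x = 0"
    by (auto simp: riesz_Q_def linear_diff[OF linear_riesz_P] riesz_P_idem)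
next
  assume "riesz_P A x = 0"
  then have "riesz_Q A x = x"
    by (simp add: riesz_Q_def)
  then show "x \<in> range (riesz_Q A)"
    by (metis rangeI)
qed

lemma PAP_pow_riesz_P: "PAP_pow A m (riesz_P A y) = green (int m + 1) y"
proof (induction m)
  case 0
  then show ?case
    by (simp add: PAP_pow_def riesz_P_eq_green)
next
  case (Suc m)
  have "PAP_pow A (Suc m) (riesz_P A y) = riesz_P A (A (riesz_P A (green (int m + 1) y)))"
    using Suc by (simp add: PAP_pow_def)
  also have "\<dots> = riesz_P A (green (int m + 1 + 1) y)"
    using green_succ_minus_A_green[of "int m + 1" y] by (simp add: riesz_P_green)
  also have "\<dots> = green (int (Suc m) + 1) y"
    by (simp add: riesz_P_green ac_simps)
  finally show ?case .
qed

lemma green_0_A: "riesz_P A z = 0 \<Longrightarrow> green 0 (A z) = - z"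
  using green_succ_minus_green_A[of 0 z] by (simp add: riesz_P_eq_green) (metis minus_minus)

lemma QA_inv_eq:
  assumes "riesz_P A y = 0"
  shows "QA_inv A y = - green 0 y"
  unfolding QA_inv_def
proof (rule the_equality)
  show "- green 0 y \<in> range (riesz_Q A) \<and> A (- green 0 y) = y"
    using assms
    by (simp add: range_riesz_Q_iff riesz_P_green linear_neg[OF linear_riesz_P]
        linear_neg[OF linear_A] A_green green_0_A)
  show "x = - green 0 y" if "x \<in> range (riesz_Q A) \<and> A x = y" for x
    using that green_0_A[of x] by (simp add: range_riesz_Q_iff)
qed

lemma QAQ_negpow_riesz_Q: "QAQ_negpow A (Suc j) (riesz_Q A y) = - green (- int j) y"
proof (induction j)
  case 0
  have "green 0 (riesz_Q A y) = green 0 y"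
    by (simp add: riesz_Q_def linear_diff[OF linear_green] green_riesz_P)
  then show ?case
    by (simp add: QAQ_negpow_def QA_inv_eq range_riesz_Q_iff[symmetric])
next
  case (Suc j)
  have "QAQ_negpow A (Suc (Suc j)) (riesz_Q A y) = QA_inv A (- green (- int j) y)"
    using Suc by (simp add: QAQ_negpow_def)
  also have "\<dots> = green 0 (green (- int j) y)"
    by (simp add: QA_inv_eq riesz_P_green linear_neg[OF linear_riesz_P] linear_neg[OF linear_green])
  also have "green (- int j) y = A (green (- int (Suc j)) y)"
    using green_succ_minus_A_green[of "- int (Suc j)" y] by simp
  also have "green 0 (A (green (- int (Suc j)) y)) = - green (- int (Suc j)) y"
    by (rule green_0_A) (simp add: riesz_P_green)
  finally show ?case .
qed

lemma green_conv_split: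
  assumes g: "l2seq g" and L: "bounded_linear L"
  shows "L (green_conv g n) = (\<Sum>\<^sub>\<infinity>k\<in>{..<n}. L (green (n - k) (g k))) + (\<Sum>\<^sub>\<infinity>k\<in>{n..}. L (green (n - k) (g k)))"
proof -
  have summable: "(\<lambda>k. L (green (n - k) (g k))) summable_on B" for B
    by (rule summable_on_bounded_linear[OF L summable_on_green_conv[OF g]])
  have "L (green_conv g n) = (\<Sum>\<^sub>\<infinity>k. L (green (n - k) (g k)))"
    using has_sum_bounded_linear[OF L green_conv_has_sum[OF g, of n]] by (simp add: infsumI)
  also have "\<dots> = (\<Sum>\<^sub>\<infinity>k\<in>{..<n} \<union> {n..}. L (green (n - k) (g k)))"
    by (rule arg_cong[where f = "infsum _"]) auto
  also have "\<dots> = (\<Sum>\<^sub>\<infinity>k\<in>{..<n}. L (green (n - k) (g k))) + (\<Sum>\<^sub>\<infinity>k\<in>{n..}. L (green (n - k) (g k)))"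
    by (rule infsum_Un_disjoint[OF summable summable]) auto
  finally show ?thesis .
qed

lemma riesz_P_green_conv:
  assumes "l2seq g"
  shows "riesz_P A (green_conv g n) = (\<Sum>\<^sub>\<infinity>k\<in>{..<n}. green (n - k) (g k))"
proof -
  have "(\<Sum>\<^sub>\<infinity>k\<in>{..<n}. riesz_P A (green (n - k) (g k))) = (\<Sum>\<^sub>\<infinity>k\<in>{..<n}. green (n - k) (g k))"
    by (rule infsum_cong) (simp add: riesz_P_green)
  moreover have "(\<Sum>\<^sub>\<infinity>k\<in>{n..}. riesz_P A (green (n - k) (g k))) = 0"
    by (rule infsum_0) (simp add: riesz_P_green)
  ultimately show ?thesis
    using green_conv_split[OF assms bounded_linear_riesz_P, of n] by simp
qed

lemma riesz_Q_green_conv: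
  assumes "l2seq g"
  shows "riesz_Q A (green_conv g n) = (\<Sum>\<^sub>\<infinity>k\<in>{n..}. green (n - k) (g k))"
proof -
  have "(\<Sum>\<^sub>\<infinity>k\<in>{..<n}. riesz_Q A (green (n - k) (g k))) = 0"
    by (rule infsum_0) (simp add: riesz_Q_green)
  moreover have "(\<Sum>\<^sub>\<infinity>k\<in>{n..}. riesz_Q A (green (n - k) (g k))) = (\<Sum>\<^sub>\<infinity>k\<in>{n..}. green (n - k) (g k))"
    by (rule infsum_cong) (simp add: riesz_Q_green)
  ultimately show ?thesis
    using green_conv_split[OF assms bounded_linear_riesz_Q, of n] by simp
qed

subsection \<open>The fixed-point equation\<close>

lemma chi_nonneg_eq_iff_riesz:
  "chi_nonneg v = u \<longleftrightarrow> spt u \<subseteq> {0..} \<and>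
     (\<forall>n. 0 \<le> n \<longrightarrow> riesz_P A (u n) = riesz_P A (v n) \<and> riesz_Q A (u n) = riesz_Q A (v n))"
  (is "_ \<longleftrightarrow> ?rhs")
proof
  assume rhs: ?rhs
  show "chi_nonneg v = u"
  proof
    fix n
    show "chi_nonneg v n = u n"
    proof (cases "0 \<le> n")
      case True
      have "u n = riesz_P A (u n) + riesz_Q A (u n)"
        by (simp add: riesz_Q_def)
      also have "\<dots> = riesz_P A (v n) + riesz_Q A (v n)"
        using rhs True by simp
      finally show ?thesis
        using True by (simp add: chi_nonneg_def riesz_Q_def)
    next
      case False
      then show ?thesis
        using rhs by (auto simp: chi_nonneg_def spt_def)
    qed
  qed
qed (auto simp: chi_nonneg_def spt_def split: if_splits)

lemma riesz_P_green_conv_delta: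
  assumes f: "l2seq f" and \<xi>: "\<xi> \<in> range (riesz_P A)" and n: "0 \<le> n"
  shows "riesz_P A (green_conv (\<lambda>k. f k + delta_m1 \<xi> k) n) = PAP_pow A (nat n) \<xi>
           + (\<Sum>\<^sub>\<infinity>k\<in>{..<n}. PAP_pow A (nat (n - 1 - k)) (riesz_P A (f k)))"
proof -
  have "riesz_P A (green_conv (\<lambda>k. f k + delta_m1 \<xi> k) n)
      = (\<Sum>\<^sub>\<infinity>k\<in>{..<n}. green (n - k) (f k) + green (n - k) (delta_m1 \<xi> k))"
    by (simp add: riesz_P_green_conv l2seq_add_diff f l2seq_delta_m1 linear_add[OF linear_green])
  also have "\<dots> = (\<Sum>\<^sub>\<infinity>k\<in>{..<n}. green (n - k) (f k)) + (\<Sum>\<^sub>\<infinity>k\<in>{..<n}. green (n - k) (delta_m1 \<xi> k))"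
    by (intro infsum_add summable_on_green_conv f l2seq_delta_m1)
  also have "(\<Sum>\<^sub>\<infinity>k\<in>{..<n}. green (n - k) (f k))
      = (\<Sum>\<^sub>\<infinity>k\<in>{..<n}. PAP_pow A (nat (n - 1 - k)) (riesz_P A (f k)))"
    by (rule infsum_cong) (simp add: PAP_pow_riesz_P)
  also have "(\<Sum>\<^sub>\<infinity>k\<in>{..<n}. green (n - k) (delta_m1 \<xi> k)) = (\<Sum>\<^sub>\<infinity>k\<in>{-1}. green (n - k) (delta_m1 \<xi> k))"
    using n by (intro infsum_cong_neutral) (auto simp: delta_m1_def linear_0[OF linear_green])
  also have "\<dots> = PAP_pow A (nat n) \<xi>"
    using \<xi> n PAP_pow_riesz_P[of "nat n" \<xi>] by (auto simp: delta_m1_def riesz_P_idem)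
  finally show ?thesis
    by (simp add: add.commute)
qed

lemma riesz_Q_green_conv_delta:
  assumes f: "l2seq f" and n: "0 \<le> n"
  shows "riesz_Q A (green_conv (\<lambda>k. f k + delta_m1 \<xi> k) n)
           = - (\<Sum>\<^sub>\<infinity>k\<in>{n..}. QAQ_negpow A (nat (k + 1 - n)) (riesz_Q A (f k)))"
proof -
  have "riesz_Q A (green_conv (\<lambda>k. f k + delta_m1 \<xi> k) n) = (\<Sum>\<^sub>\<infinity>k\<in>{n..}. green (n - k) (f k))"
    using n by (simp add: riesz_Q_green_conv l2seq_add_diff f l2seq_delta_m1)
      (auto simp: delta_m1_def intro: infsum_cong)
  also have "\<dots> = (\<Sum>\<^sub>\<infinity>k\<in>{n..}. - QAQ_negpow A (nat (k + 1 - n)) (riesz_Q A (f k)))"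
  proof (rule infsum_cong)
    fix k assume "k \<in> {n..}"
    then have "nat (k + 1 - n) = Suc (nat (k - n))" "- int (nat (k - n)) = n - k"
      by auto
    then show "green (n - k) (f k) = - QAQ_negpow A (nat (k + 1 - n)) (riesz_Q A (f k))"
      by (simp add: QAQ_negpow_riesz_Q)
  qed
  finally show ?thesis
    by (simp add: infsum_uminus)
qed

lemma L1_eq_chi_nonneg_green_conv:
  "l2seq (F w) \<Longrightarrow> L1 A F \<xi> w = chi_nonneg (green_conv (\<lambda>k. F w k + delta_m1 \<xi> k))"
  by (simp add: L1_def shift_minus_inv_eq_green_conv l2seq_add_diff l2seq_delta_m1)

lemma L1_fixed_point_iff:
  assumes "l2seq (F u)" "\<xi> \<in> range (riesz_P A)"
  shows "L1 A F \<xi> u = u \<longleftrightarrow> spt u \<subseteq> {0..} \<and>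
     (\<forall>n. 0 \<le> n \<longrightarrow>
        riesz_P A (u n) = PAP_pow A (nat n) \<xi>
          + (\<Sum>\<^sub>\<infinity>k\<in>{..<n}. PAP_pow A (nat (n - 1 - k)) (riesz_P A (F u k)))
      \<and> riesz_Q A (u n) = - (\<Sum>\<^sub>\<infinity>k\<in>{n..}. QAQ_negpow A (nat (k + 1 - n)) (riesz_Q A (F u k))))"
  by (simp add: L1_eq_chi_nonneg_green_conv[where F = F and w = u, OF assms(1)] chi_nonneg_eq_iff_riesz
      riesz_P_green_conv_delta[OF assms] riesz_Q_green_conv_delta[OF assms(1)])

text \<open>The difference of two fixed points is the restriction to n \<ge> 0 of the Green convolution
  of F v - F w, so its l_2 norm is at most M1 * Lip times itself.\<close>
lemma L1_fixed_point_unique: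
  assumes F_l2: "\<forall>w. l2seq w \<longrightarrow> l2seq (F w)"
    and F_lip: "\<forall>v w. l2seq v \<longrightarrow> l2seq w \<longrightarrow> l2norm (\<lambda>n. F v n - F w n) \<le> Lip * l2norm (\<lambda>n. v n - w n)"
    and contraction: "M1 A * Lip < 1"
    and v: "l2seq v" "L1 A F \<xi> v = v" and w: "l2seq w" "L1 A F \<xi> w = w"
  shows "v = w"
proof -
  define d where "d = (\<lambda>n. v n - w n)"
  define h where "h = (\<lambda>k. F v k - F w k)"
  have h: "l2seq h"
    unfolding h_def using F_l2 v w by (intro l2seq_add_diff) auto
  have "d = chi_nonneg (green_conv h)"
  proof
    fix n
    have "d n = chi_nonneg (green_conv (\<lambda>k. F v k + delta_m1 \<xi> k)) n
        - chi_nonneg (green_conv (\<lambda>k. F w k + delta_m1 \<xi> k)) n"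
      using v w F_l2 by (simp add: d_def L1_eq_chi_nonneg_green_conv)
    also have "\<dots> = chi_nonneg (green_conv h) n"
      using F_l2 v w
      by (simp add: chi_nonneg_def green_conv_diff l2seq_add_diff l2seq_delta_m1 h_def)
    finally show "d n = chi_nonneg (green_conv h) n" .
  qed
  then have "l2norm d \<le> M1 A * l2norm h"
    using l2norm_chi_nonneg_le[OF l2seq_green_conv[OF h]] l2norm_green_conv_le[OF h] by simp
  also have "\<dots> \<le> M1 A * (Lip * l2norm d)"
    using F_lip v w M1_nonneg by (intro mult_left_mono) (auto simp: h_def d_def)
  finally have "l2norm d \<le> (M1 A * Lip) * l2norm d"
    by (simp add: mult.assoc)
  then have "(1 - M1 A * Lip) * l2norm d \<le> 0"
    by (simp add: left_diff_distrib)
  with contraction have "l2norm d \<le> 0"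
    by (simp add: mult_le_0_iff)
  then have "d n = 0" for n
    using l2seq_add_diff(2)[OF v(1) w(1)] by (intro l2norm_eq_0D) (simp_all add: d_def)
  then show ?thesis
    by (auto simp: d_def)
qed

end

theorem theorem4p9:
  fixes A :: "'h::complex_hilbert \<Rightarrow> 'h"
    and F :: "(int \<Rightarrow> 'h) \<Rightarrow> (int \<Rightarrow> 'h)"
    and Lip :: real and \<xi> :: 'h and u :: "int \<Rightarrow> 'h"
  assumes sep: "separable_space (euclidean :: 'h topology)"
    and A_bdd: "bounded_clinear_op A"
    and hyp: "hyperbolic A"
    and F_l2: "\<forall>w. l2seq w \<longrightarrow> l2seq (F w)"
    and F_lip: "\<forall>v w. l2seq v \<longrightarrow> l2seq w \<longrightarrow> l2norm (\<lambda>n. F v n - F w n) \<le> Lip * l2norm (\<lambda>n. v n - w n)"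
    and Lip_small: "Lip < 1 / M1 A"
    and \<xi>_P: "\<xi> \<in> range (riesz_P A)"
    and u_l2: "l2seq u"
  shows "(L1 A F \<xi> u = u \<and> (\<forall>w. l2seq w \<longrightarrow> L1 A F \<xi> w = w \<longrightarrow> w = u))
     \<longleftrightarrow>
     (spt u \<subseteq> {0..} \<and>
      (\<forall>n::int. 0 \<le> n \<longrightarrow>
         riesz_P A (u n) = PAP_pow A (nat n) \<xi>
            + (\<Sum>\<^sub>\<infinity>k\<in>{..<n}. PAP_pow A (nat (n - 1 - k)) (riesz_P A (F u k)))
       \<and> riesz_Q A (u n) = - (\<Sum>\<^sub>\<infinity>k\<in>{n..}. QAQ_negpow A (nat (k + 1 - n)) (riesz_Q A (F u k)))))"
proof -
  interpret hyperbolic_operator A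
    using A_bdd hyp by unfold_locales
  have contraction: "M1 A * Lip < 1"
    using Lip_small M1_nonneg by (cases "M1 A = 0") (auto simp: field_simps)
  have unique: "w = u" if "l2seq w" "L1 A F \<xi> w = w" "L1 A F \<xi> u = u" for w
    using L1_fixed_point_unique[OF F_l2 F_lip contraction] that u_l2 by blast
  have "l2seq (F u)"
    using F_l2 u_l2 by blast
  show ?thesis
    unfolding L1_fixed_point_iff[where F = F and u = u, OF \<open>l2seq (F u)\<close> \<xi>_P, symmetric]
    using unique by blast
qed

end
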